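(* Let $f:\mathbb{N}\to\mathbb{N}\cup\{\infty\}$ be any function, and let $\mathbf{P}_f$ be the set of integer partitions in which, for every $i$, the part $i$ appears at most $f(i)$ times. Then $\mathbf{P}_f$ is a distributive sublattice of the Young lattice; that is, $\mathbf{P}_f$ is closed under the partwise join and meet of the Young lattice.
   Context: $\mathbb{N}$ denotes the positive integers. The Young lattice is the set of all integer partitions (including the empty one) ordered by $\lambda\le\mu$ iff $\lambda_i\le\mu_i$ for all $i$ (parts beyond the length being $0$); its join and meet are given partwise by $(\lambda\vee\mu)_i=\max(\lambda_i,\mu_i)$ and $(\lambda\wedge\mu)_i=\min(\lambda_i,\mu_i)$. *)

theory Defs
  imports Main "HOL-Library.Extended_Nat"
begin

text \<open>An integer partition is represented by its sequence of parts
  p 0 \<ge> p 1 \<ge> ... (p j is the (j+1)-st part), weakly decreasing and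
  eventually 0. The empty partition is the constant 0 function.\<close>

definition is_partition :: "(nat \<Rightarrow> nat) \<Rightarrow> bool" where
  "is_partition p \<longleftrightarrow> antimono p \<and> (\<exists>n. \<forall>j\<ge>n. p j = 0)"

text \<open>Number of times the part i occurs in p (meaningful for i \<ge> 1).\<close>
definition multiplicity_part :: "(nat \<Rightarrow> nat) \<Rightarrow> nat \<Rightarrow> nat" where
  "multiplicity_part p i = card {j. p j = i}"

text \<open>P_f: partitions in which each part i \<ge> 1 appears at most f i times
  (f i = \<infinity> meaning no restriction). The value f 0 is irrelevant.\<close>
definition P_f :: "(nat \<Rightarrow> enat) \<Rightarrow> (nat \<Rightarrow> nat) set" where
  "P_f f = {p. is_partition p \<and> (\<forall>i\<ge>1. enat (multiplicity_part p i) \<le> f i)}"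

definition young_join :: "(nat \<Rightarrow> nat) \<Rightarrow> (nat \<Rightarrow> nat) \<Rightarrow> (nat \<Rightarrow> nat)" where
  "young_join p q = (\<lambda>j. max (p j) (q j))"

definition young_meet :: "(nat \<Rightarrow> nat) \<Rightarrow> (nat \<Rightarrow> nat) \<Rightarrow> (nat \<Rightarrow> nat)" where
  "young_meet p q = (\<lambda>j. min (p j) (q j))"

end

theory Submission
  imports Defs
begin

text \<open>Two weakly decreasing sequences cannot cross at a level in both directions: if the join
  takes the value i at a position where only q equals i and at another where only p equals i,
  monotonicity of p and q is violated whichever position comes first. Hence every level set of
  the join (and dually of the meet) lies inside a level set of p or of q, so each multiplicity
  of the join or meet is bounded by a multiplicity of p or of q.\<close>

lemma antimono_max_level_subset:
  fixes p q :: "nat \<Rightarrow> 'a::linorder"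
  assumes "antimono p" "antimono q"
  shows "{j. max (p j) (q j) = i} \<subseteq> {j. p j = i} \<or> {j. max (p j) (q j) = i} \<subseteq> {j. q j = i}"
proof (rule ccontr)
  assume "\<not> ?thesis"
  then obtain j1 j2 where "max (p j1) (q j1) = i" "p j1 \<noteq> i" "max (p j2) (q j2) = i" "q j2 \<noteq> i"
    by blast
  then have "p j1 < i" "q j1 = i" "p j2 = i" "q j2 < i"
    by (auto simp: max_def split: if_splits)
  with antimonoD[OF assms(1), of j1 j2] antimonoD[OF assms(2), of j2 j1] show False
    by (cases "j1 \<le> j2") auto
qed

lemma antimono_min_level_subset:
  fixes p q :: "nat \<Rightarrow> 'a::linorder"
  assumes "antimono p" "antimono q"
  shows "{j. min (p j) (q j) = i} \<subseteq> {j. p j = i} \<or> {j. min (p j) (q j) = i} \<subseteq> {j. q j = i}"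
proof (rule ccontr)
  assume "\<not> ?thesis"
  then obtain j1 j2 where "min (p j1) (q j1) = i" "p j1 \<noteq> i" "min (p j2) (q j2) = i" "q j2 \<noteq> i"
    by blast
  then have "p j1 > i" "q j1 = i" "p j2 = i" "q j2 > i"
    by (auto simp: min_def split: if_splits)
  with antimonoD[OF assms(1), of j2 j1] antimonoD[OF assms(2), of j1 j2] show False
    by (cases "j1 \<le> j2") auto
qed

lemma is_partition_young_join:
  assumes "is_partition p" "is_partition q"
  shows "is_partition (young_join p q)"
proof -
  obtain m n where "\<forall>j\<ge>m. p j = 0" "\<forall>j\<ge>n. q j = 0"
    using assms by (auto simp: is_partition_def)
  then have "\<forall>j\<ge>max m n. max (p j) (q j) = 0"
    by simp
  moreover have "antimono (\<lambda>j. max (p j) (q j))"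
    using assms by (intro antimonoI max.mono) (auto simp: is_partition_def dest: antimonoD)
  ultimately show ?thesis
    unfolding is_partition_def young_join_def by blast
qed

lemma is_partition_young_meet:
  assumes "is_partition p" "is_partition q"
  shows "is_partition (young_meet p q)"
proof -
  obtain n where "\<forall>j\<ge>n. p j = 0"
    using assms by (auto simp: is_partition_def)
  then have "\<forall>j\<ge>n. min (p j) (q j) = 0"
    by simp
  moreover have "antimono (\<lambda>j. min (p j) (q j))"
    using assms by (intro antimonoI min.mono) (auto simp: is_partition_def dest: antimonoD)
  ultimately show ?thesis
    unfolding is_partition_def young_meet_def by blast
qed

lemma finite_level_set_partition:
  assumes "is_partition p" "i \<ge> 1"
  shows "finite {j. p j = i}"
proof -
  obtain n where "\<forall>j\<ge>n. p j = 0"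
    using assms(1) by (auto simp: is_partition_def)
  with assms(2) have "{j. p j = i} \<subseteq> {..<n}"
    by (auto simp flip: not_less)
  then show ?thesis
    by (rule finite_subset) simp
qed

lemma P_f_if_level_sets_subset:
  assumes "p \<in> P_f f" "q \<in> P_f f" "is_partition g"
    and levels: "\<And>i. {j. g j = i} \<subseteq> {j. p j = i} \<or> {j. g j = i} \<subseteq> {j. q j = i}"
  shows "g \<in> P_f f"
proof -
  have "enat (multiplicity_part g i) \<le> f i" if "i \<ge> 1" for i
  proof -
    have bound: "enat (multiplicity_part g i) \<le> f i"
      if "r \<in> P_f f" "{j. g j = i} \<subseteq> {j. r j = i}" for r
    proof -
      have "finite {j. r j = i}"
        using \<open>r \<in> P_f f\<close> \<open>i \<ge> 1\<close> by (auto simp: P_f_def intro: finite_level_set_partition)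
      then have "multiplicity_part g i \<le> multiplicity_part r i"
        unfolding multiplicity_part_def using that(2) by (rule card_mono)
      also have "enat (multiplicity_part r i) \<le> f i"
        using \<open>r \<in> P_f f\<close> \<open>i \<ge> 1\<close> by (simp add: P_f_def)
      finally show ?thesis
        by simp
    qed
    show ?thesis
      using levels[of i] bound assms(1,2) by blast
  qed
  with \<open>is_partition g\<close> show ?thesis
    by (simp add: P_f_def)
qed

theorem mainTheorem4:
  fixes f :: "nat \<Rightarrow> enat"
  shows "\<forall>p\<in>P_f f. \<forall>q\<in>P_f f. young_join p q \<in> P_f f \<and> young_meet p q \<in> P_f f"
proof (intro ballI conjI)
  fix p q
  assume pq: "p \<in> P_f f" "q \<in> P_f f"
  then have partitions: "is_partition p" "is_partition q"
    by (simp_all add: P_f_def)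
  then have "antimono p" "antimono q"
    by (simp_all add: is_partition_def)
  show "young_join p q \<in> P_f f"
    using antimono_max_level_subset[OF \<open>antimono p\<close> \<open>antimono q\<close>]
    by (intro P_f_if_level_sets_subset[OF pq is_partition_young_join[OF partitions]])
      (simp add: young_join_def)
  show "young_meet p q \<in> P_f f"
    using antimono_min_level_subset[OF \<open>antimono p\<close> \<open>antimono q\<close>]
    by (intro P_f_if_level_sets_subset[OF pq is_partition_young_meet[OF partitions]])
      (simp add: young_meet_def)
qed

end
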